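(* Let $q$ be a prime power and let $n\le m$ and $k\le n$ be positive integers. Let $\alpha_0,\dots,\alpha_{n-1}\in\mathbb F_{q^m}$ be linearly independent over $\mathbb F_q$, and let $\mathcal G$ be the Gabidulin code $$\mathcal G=\{(f(\alpha_0),\dots,f(\alpha_{n-1})) : f(x)=\textstyle\sum_{i} f_i x^{q^i},\ f_i\in\mathbb F_{q^m},\ \deg_q f<k\},$$ which has minimum rank distance $d=n-k+1$. Let $\tau<d$. Then there exists a word $\mathbf r\in\mathbb F_{q^m}^n$ such that the maximum list size $\ell=\ell(m,n,d,\tau)=\max_{\mathbf y\in\mathbb F_{q^m}^n}|\mathcal G\cap\mathcal B_\tau(\mathbf y)|$ satisfies $$\ell\ \ge\ |\mathcal G\cap\mathcal S_\tau(\mathbf r)|\ \ge\ \frac{\binom{n}{n-\tau}_q}{(q^m)^{n-\tau-k}}\ \ge\ q^m\, q^{\tau(m+n)-\tau^2-md},$$ and in the special case $n=m$, $\ell\ge q^n q^{2n\tau-\tau^2-nd}$.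
   Context: Fixing a basis of $\mathbb F_{q^m}$ over $\mathbb F_q$, each vector $\mathbf x\in\mathbb F_{q^m}^n$ is identified with an $m\times n$ matrix over $\mathbb F_q$; $\mathrm{rk}(\mathbf x)$ denotes the rank of this matrix, and the rank distance is $d_R(\mathbf x,\mathbf y)=\mathrm{rk}(\mathbf x-\mathbf y)$. $\mathcal B_\tau(\mathbf a)=\{\mathbf x\in\mathbb F_{q^m}^n:\mathrm{rk}(\mathbf x-\mathbf a)\le\tau\}$ and $\mathcal S_\tau(\mathbf a)=\{\mathbf x:\mathrm{rk}(\mathbf x-\mathbf a)=\tau\}$. For a linearized polynomial $f(x)=\sum_i f_i x^{q^i}$, $\deg_q f$ is the largest $i$ with $f_i\neq0$. The Gaussian binomial is $\binom{n}{r}_q=\prod_{i=0}^{r-1}\frac{q^n-q^i}{q^r-q^i}$. *)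

theory Defs
  imports Complex_Main "HOL-Computational_Algebra.Primes"
begin

text \<open>The field F_{q^m} is a finite field type 'a with CARD('a) = q^m; its
subfield F_q is the set of roots of x^q - x.  Vectors of F_{q^m}^n are functions
nat => 'a vanishing outside {..<n}.\<close>

definition prime_power :: "nat \<Rightarrow> bool" where
  "prime_power q \<longleftrightarrow> (\<exists>p e. prime p \<and> e \<ge> 1 \<and> q = p ^ e)"

definition Fq :: "nat \<Rightarrow> 'a::field set" where
  "Fq q = {x. x ^ q = x}"

definition words :: "nat \<Rightarrow> (nat \<Rightarrow> 'a::field) set" where
  "words n = {y. \<forall>i\<ge>n. y i = 0}"

definition lin_indep_Fq :: "nat \<Rightarrow> nat set \<Rightarrow> (nat \<Rightarrow> 'a::field) \<Rightarrow> bool" where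
  "lin_indep_Fq q I x \<longleftrightarrow>
     (\<forall>c. (\<forall>i\<in>I. c i \<in> Fq q) \<longrightarrow> (\<Sum>i\<in>I. c i * x i) = 0 \<longrightarrow> (\<forall>i\<in>I. c i = 0))"

text \<open>Rank of x in F_{q^m}^n: rank of its m x n matrix over F_q, i.e. the
maximal number of F_q-linearly independent columns (entries).\<close>
definition rk :: "nat \<Rightarrow> nat \<Rightarrow> (nat \<Rightarrow> 'a::field) \<Rightarrow> nat" where
  "rk q n x = Max {card I | I. I \<subseteq> {..<n} \<and> lin_indep_Fq q I x}"

definition rank_ball :: "nat \<Rightarrow> nat \<Rightarrow> nat \<Rightarrow> (nat \<Rightarrow> 'a::field) \<Rightarrow> (nat \<Rightarrow> 'a) set" where
  "rank_ball q n \<tau> a = {x \<in> words n. rk q n (x - a) \<le> \<tau>}"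

definition rank_sphere :: "nat \<Rightarrow> nat \<Rightarrow> nat \<Rightarrow> (nat \<Rightarrow> 'a::field) \<Rightarrow> (nat \<Rightarrow> 'a) set" where
  "rank_sphere q n \<tau> a = {x \<in> words n. rk q n (x - a) = \<tau>}"

definition gabidulin :: "nat \<Rightarrow> nat \<Rightarrow> nat \<Rightarrow> (nat \<Rightarrow> 'a::field) \<Rightarrow> (nat \<Rightarrow> 'a) set" where
  "gabidulin q n k \<alpha> =
     {(\<lambda>i. if i < n then (\<Sum>j<k. f j * \<alpha> i ^ (q ^ j)) else 0) | f. True}"

definition max_list_size :: "nat \<Rightarrow> nat \<Rightarrow> nat \<Rightarrow> (nat \<Rightarrow> 'a::field) set \<Rightarrow> nat" where
  "max_list_size q n \<tau> C = Max ((\<lambda>y. card (C \<inter> rank_ball q n \<tau> y)) ` words n)"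

definition gauss_binom :: "nat \<Rightarrow> nat \<Rightarrow> nat \<Rightarrow> real" where
  "gauss_binom q n r = (\<Prod>i<r. (real q ^ n - real q ^ i) / (real q ^ r - real q ^ i))"

end

theory Submission
  imports Defs "HOL-Number_Theory.Residues" "HOL-Computational_Algebra.Polynomial" "HOL-Library.FuncSet"
begin

text \<open>
  Let V be the F_q-span of \<alpha>_0, \<dots>, \<alpha>_(n-1), an n-dimensional F_q-subspace of F_(q^m), and let
  s = n - \<tau>. Every s-dimensional subspace U of V is annihilated by a monic linearized polynomial
  P(x) = x^(q^s) + \<Sum>_(j<s) c_j x^(q^j); since P has at most q^s roots, its kernel on V is exactly U,
  so P(V) has dimension \<tau>. Counting ordered bases shows that at least [n choose s]_q coefficient
  vectors c arise in this way, and by pigeonhole at least [n choose s]_q / (q^m)^(s-k) of them share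
  the tail c_k, \<dots>, c_(s-1). Let r be the evaluation at \<alpha> of x^(q^s) + \<Sum>_(k\<le>j<s) c_j x^(q^j) for
  this common tail. The codewords of the polynomials -\<Sum>_(j<k) c_j x^(q^j) then differ from r by
  -P(\<alpha>), which has rank \<tau>, and they are pairwise distinct because k \<le> n.
  Finally, [n choose s]_q \<ge> q^(s\<tau>).
\<close>

lemma card_eq_card_image_mult_card_kernel:
  fixes \<phi> :: "'b::ab_group_add \<Rightarrow> 'c::ab_group_add"
  assumes fin: "finite G" and closed: "\<And>x y. x \<in> G \<Longrightarrow> y \<in> G \<Longrightarrow> x - y \<in> G"
    and hom: "\<And>x y. x \<in> G \<Longrightarrow> y \<in> G \<Longrightarrow> \<phi> (x - y) = \<phi> x - \<phi> y"
  shows "card G = card (\<phi> ` G) * card {x\<in>G. \<phi> x = 0}"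
proof -
  have "card G = card (\<Union>b\<in>\<phi> ` G. {a\<in>G. \<phi> a = b})"
    by (rule arg_cong[of _ _ card]) auto
  also have "\<dots> = (\<Sum>b\<in>\<phi> ` G. card {a\<in>G. \<phi> a = b})"
    by (rule card_UN_disjoint) (use fin in auto)
  also have "\<dots> = (\<Sum>b\<in>\<phi> ` G. card {x\<in>G. \<phi> x = 0})"
  proof (rule sum.cong[OF refl])
    fix b assume "b \<in> \<phi> ` G"
    then obtain a0 where a0: "a0 \<in> G" "\<phi> a0 = b" by blast
    show "card {a\<in>G. \<phi> a = b} = card {x\<in>G. \<phi> x = 0}"
      by (rule bij_betw_same_card[of "\<lambda>a. a0 - a"], rule bij_betw_byWitness[of _ "\<lambda>z. a0 - z"])
        (use a0 closed hom in auto)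
  qed
  also have "\<dots> = card (\<phi> ` G) * card {x\<in>G. \<phi> x = 0}" by simp
  finally show ?thesis .
qed

lemma power_card_eq_self:
  fixes x :: "'a::{finite,field}"
  shows "x ^ card (UNIV :: 'a set) = x"
proof -
  let ?N = "UNIV - {0::'a}"
  have "card (UNIV :: 'a set) > 0" by (simp add: card_gt_0_iff)
  then have card: "card (UNIV :: 'a set) = Suc (card ?N)"
    using card_Diff_singleton[of "0::'a" UNIV] by simp
  show ?thesis
  proof (cases "x = 0")
    case False
    have "(\<Prod>y\<in>?N. x * y) = (\<Prod>y\<in>?N. y)"
      by (rule prod.reindex_bij_witness[of _ "\<lambda>y. y / x" "\<lambda>y. x * y"]) (use False in auto)
    then have "x ^ card ?N * (\<Prod>y\<in>?N. y) = 1 * (\<Prod>y\<in>?N. y)"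
      by (simp add: prod.distrib)
    moreover have "(\<Prod>y\<in>?N. y) \<noteq> 0" by simp
    ultimately have "x ^ card ?N = 1" by (metis mult_right_cancel)
    then show ?thesis unfolding card by simp
  qed (simp only: card power_Suc mult_zero_left)
qed

lemma finite_words: "finite (words n :: (nat \<Rightarrow> 'a::{finite,field}) set)"
proof -
  have "words n \<subseteq> (\<lambda>f i. if i < n then f i else 0) ` (\<Pi>\<^sub>E i\<in>{..<n}. (UNIV :: 'a set))"
  proof
    fix y :: "nat \<Rightarrow> 'a" assume y: "y \<in> words n"
    have "y = (\<lambda>i. if i < n then restrict y {..<n} i else 0)"
      using y by (auto simp: words_def fun_eq_iff)
    then show "y \<in> (\<lambda>f i. if i < n then f i else 0) ` (\<Pi>\<^sub>E i\<in>{..<n}. (UNIV :: 'a set))"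
      by (intro image_eqI[of _ _ "restrict y {..<n}"]) auto
  qed
  then show ?thesis by (rule finite_subset) (intro finite_imageI finite_PiE, auto)
qed

lemma gauss_binom_ge_power:
  assumes "2 \<le> q" "r \<le> n"
  shows "real q ^ ((n - r) * r) \<le> gauss_binom q n r"
proof -
  have "real q ^ ((n - r) * r) = (\<Prod>i<r. real q ^ (n - r))"
    by (subst power_mult) simp
  also have "\<dots> \<le> (\<Prod>i<r. (real q ^ n - real q ^ i) / (real q ^ r - real q ^ i))"
  proof (rule prod_mono, safe)
    fix i assume i: "i < r"
    have pos: "real q ^ r - real q ^ i > 0" using i assms(1) by (simp add: power_strict_increasing)
    have "real q ^ i \<le> real q ^ (n - r + i)" using assms(1) by (intro power_increasing) auto
    then have "real q ^ (n - r) * (real q ^ r - real q ^ i) \<le> real q ^ n - real q ^ i"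
      using assms(2) by (simp add: right_diff_distrib power_add[symmetric])
    then show "real q ^ (n - r) \<le> (real q ^ n - real q ^ i) / (real q ^ r - real q ^ i)"
      using pos by (simp add: pos_le_divide_eq)
  qed simp
  finally show ?thesis by (simp add: gauss_binom_def)
qed

lemma gauss_binom_mult_denominator:
  assumes "2 \<le> q" "r \<le> n"
  shows "gauss_binom q n r * real (\<Prod>i<r. q ^ r - q ^ i) = real (\<Prod>i<r. q ^ n - q ^ i)"
proof -
  define N where "N = (\<Prod>i<r. real q ^ n - real q ^ i)"
  define D where "D = (\<Prod>i<r. real q ^ r - real q ^ i)"
  have diff: "real (q ^ a - q ^ i) = real q ^ a - real q ^ i" if "i \<le> a" for a i
    using that assms(1) by (simp add: of_nat_diff power_increasing)
  have "real (\<Prod>i<r. q ^ r - q ^ i) = D"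
    unfolding D_def of_nat_prod by (rule prod.cong) (auto simp: diff)
  moreover have "real (\<Prod>i<r. q ^ n - q ^ i) = N"
    unfolding N_def of_nat_prod by (rule prod.cong) (use assms(2) in \<open>auto simp: diff\<close>)
  moreover have "gauss_binom q n r = N / D"
    unfolding gauss_binom_def N_def D_def by (rule prod_dividef)
  moreover have "0 < D"
    unfolding D_def by (rule prod_pos) (use assms(1) in \<open>auto simp: power_strict_increasing\<close>)
  ultimately show ?thesis by simp
qed

lemma powi_exponent_rewrite:
  fixes q m n k d \<tau> :: nat
  assumes "q > 0" "k \<le> n" "d = n - k + 1" "\<tau> \<le> n - k"
  shows "real q ^ m * real q powi (int \<tau> * int (m + n) - int \<tau> ^ 2 - int m * int d)
       = real q ^ ((n - \<tau>) * \<tau>) / (real q ^ m) ^ (n - \<tau> - k)"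
proof -
  have exponent: "int m + (int \<tau> * int (m + n) - int \<tau> ^ 2 - int m * int d)
      = int ((n - \<tau>) * \<tau>) - int (m * (n - \<tau> - k))"
  proof -
    have "int ((n - \<tau>) * \<tau>) = (int n - int \<tau>) * int \<tau>"
      and "int (m * (n - \<tau> - k)) = int m * (int n - int \<tau> - int k)"
      and "int d = int n - int k + 1"
      using assms(2-4) by (simp_all add: of_nat_diff)
    then show ?thesis by (simp only:) (simp add: algebra_simps power2_eq_square)
  qed
  have q0: "real q \<noteq> 0" using assms(1) by simp
  have "real q ^ m * real q powi (int \<tau> * int (m + n) - int \<tau> ^ 2 - int m * int d)
      = real q powi (int m + (int \<tau> * int (m + n) - int \<tau> ^ 2 - int m * int d))"
    using q0 by (simp add: power_int_add)
  also have "\<dots> = real q powi int ((n - \<tau>) * \<tau>) / real q powi int (m * (n - \<tau> - k))"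
    unfolding exponent using q0 by (rule power_int_diff[OF disjI1])
  finally show ?thesis by (simp only: power_int_of_nat power_mult)
qed

lemma powi_le_gauss_binom_div:
  fixes q m n k d \<tau> :: nat
  assumes "2 \<le> q" "k \<le> n" "d = n - k + 1" "\<tau> \<le> n - k"
  shows "real q ^ m * real q powi (int \<tau> * int (m + n) - int \<tau> ^ 2 - int m * int d)
       \<le> gauss_binom q n (n - \<tau>) / (real q ^ m) ^ (n - \<tau> - k)"
proof -
  have "0 < q" using assms(1) by simp
  have "real q ^ ((n - \<tau>) * \<tau>) \<le> gauss_binom q n (n - \<tau>)"
    using gauss_binom_ge_power[OF assms(1), of "n - \<tau>" n] assms(4) by (simp add: mult.commute)
  then show ?thesis
    unfolding powi_exponent_rewrite[OF \<open>0 < q\<close> assms(2-4)] by (rule divide_right_mono) simp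
qed

lemma card_Int_rank_sphere_le_max_list_size:
  fixes C :: "(nat \<Rightarrow> 'a::{finite,field}) set"
  assumes "r \<in> words n"
  shows "card (C \<inter> rank_sphere q n \<tau> r) \<le> max_list_size q n \<tau> C"
proof -
  have "card (C \<inter> rank_sphere q n \<tau> r) \<le> card (C \<inter> rank_ball q n \<tau> r)"
    by (rule card_mono) (auto intro: finite_subset[OF _ finite_words] simp: rank_ball_def rank_sphere_def)
  also have "\<dots> \<le> max_list_size q n \<tau> C"
    unfolding max_list_size_def by (rule Max_ge) (use finite_words assms in auto)
  finally show ?thesis .
qed

context
  fixes q m :: nat
  assumes prime_power_q: "prime_power q"
    and card_UNIV: "card (UNIV :: 'a::{finite,field} set) = q ^ m"
begin

lemma two_le_q: "2 \<le> q"
proof -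
  obtain p e where "prime p" "e \<ge> 1" "q = p ^ e"
    using prime_power_q unfolding prime_power_def by blast
  then show ?thesis
    using prime_ge_2_nat[of p] power_increasing[of 1 e p] by simp
qed

lemma q_pos: "0 < q"
  using two_le_q by simp

lemma one_le_m: "1 \<le> m"
proof (rule ccontr)
  assume "\<not> 1 \<le> m"
  then have "card (UNIV :: 'a set) = 1" using card_UNIV by simp
  moreover have "card {0, 1 :: 'a} \<le> card (UNIV :: 'a set)" by (rule card_mono) auto
  ultimately show False by simp
qed

lemma q_eq_CHAR_power:
  obtains e where "q = CHAR('a) ^ e" and "prime CHAR('a)"
proof -
  obtain p e where p: "prime p" "q = p ^ e"
    using prime_power_q unfolding prime_power_def by blast
  have prime_CHAR: "prime CHAR('a)"
    by (rule prime_CHAR_semidom) (simp add: finite_imp_CHAR_pos)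
  have "CHAR('a) dvd p ^ (e * m)"
    using CHAR_dvd_CARD[where 'a='a] card_UNIV p(2) by (simp add: power_mult)
  then have "CHAR('a) dvd p" by (rule prime_dvd_power[OF prime_CHAR])
  then have "CHAR('a) = p" by (rule primes_dvd_imp_eq[OF prime_CHAR p(1)])
  with p(2) prime_CHAR show ?thesis by (intro that) simp_all
qed

lemma frobenius_add: "(x + y :: 'a) ^ (q ^ j) = x ^ (q ^ j) + y ^ (q ^ j)"
proof -
  obtain e where q: "q = CHAR('a) ^ e" and prime: "prime CHAR('a)" by (rule q_eq_CHAR_power)
  have "q ^ j = CHAR('a) ^ (e * j)" unfolding q by (rule power_mult[symmetric])
  then show ?thesis by (rule freshmans_dream'[OF prime])
qed

lemma frobenius_neg: "(- x :: 'a) ^ (q ^ j) = - (x ^ (q ^ j))"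
  using frobenius_add[of "- x" x j] q_pos by (simp add: zero_power eq_neg_iff_add_eq_0)

lemma frobenius_diff: "(x - y :: 'a) ^ (q ^ j) = x ^ (q ^ j) - y ^ (q ^ j)"
  using frobenius_add[of x "- y" j] frobenius_neg[of y j] by simp

lemma power_q_power_m: "(x :: 'a) ^ (q ^ m) = x"
  using power_card_eq_self[of x] card_UNIV by simp

lemma Fq_power_q_power: "(x :: 'a) \<in> Fq q \<Longrightarrow> x ^ (q ^ j) = x"
  by (induction j) (simp_all add: Fq_def power_mult)

lemma Fq_0: "(0 :: 'a) \<in> Fq q"
  using q_pos by (simp add: Fq_def)

lemma Fq_1: "(1 :: 'a) \<in> Fq q"
  by (simp add: Fq_def)

lemma Fq_add: "(x :: 'a) \<in> Fq q \<Longrightarrow> y \<in> Fq q \<Longrightarrow> x + y \<in> Fq q"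
  using frobenius_add[of x y 1] by (simp add: Fq_def)

lemma Fq_neg: "(x :: 'a) \<in> Fq q \<Longrightarrow> - x \<in> Fq q"
  using frobenius_neg[of x 1] by (simp add: Fq_def)

lemma Fq_diff: "(x :: 'a) \<in> Fq q \<Longrightarrow> y \<in> Fq q \<Longrightarrow> x - y \<in> Fq q"
  using frobenius_diff[of x y 1] by (simp add: Fq_def)

lemma Fq_mult: "(x :: 'a) \<in> Fq q \<Longrightarrow> y \<in> Fq q \<Longrightarrow> x * y \<in> Fq q"
  by (simp add: Fq_def power_mult_distrib)

lemma Fq_divide: "(x :: 'a) \<in> Fq q \<Longrightarrow> y \<in> Fq q \<Longrightarrow> x / y \<in> Fq q"
  by (simp add: Fq_def power_divide)

section \<open>Linearized polynomials\<close>

definition linearized :: "(nat \<Rightarrow> 'a) \<Rightarrow> nat \<Rightarrow> 'a \<Rightarrow> 'a" where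
  "linearized c D x = (\<Sum>j<D. c j * x ^ (q ^ j))"

lemma card_linearized_roots_le:
  assumes "j0 < D" "c j0 \<noteq> 0"
  shows "card {x. linearized c D x = 0} \<le> q ^ (D - 1)"
proof -
  define P where "P = (\<Sum>j<D. monom (c j) (q ^ j))"
  have eval: "poly P x = linearized c D x" for x
    by (simp add: P_def linearized_def poly_sum poly_monom)
  have "inj (\<lambda>j. q ^ j)" using two_le_q by (auto simp: inj_def)
  then have "coeff P (q ^ j0) = c j0"
    using assms by (simp add: P_def coeff_sum inj_eq sum.delta)
  then have "P \<noteq> 0" using assms(2) by auto
  have "degree P \<le> q ^ (D - 1)" unfolding P_def
  proof (rule degree_sum_le)
    fix j assume "j \<in> {..<D}"
    then have "q ^ j \<le> q ^ (D - 1)" using q_pos by (intro power_increasing) auto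
    then show "degree (monom (c j) (q ^ j)) \<le> q ^ (D - 1)"
      using degree_monom_le le_trans by blast
  qed auto
  then show ?thesis
    using card_poly_roots_bound[OF \<open>P \<noteq> 0\<close>] eval by simp
qed

lemma linearized_add: "linearized c D (x + y) = linearized c D x + linearized c D (y :: 'a)"
  by (simp add: linearized_def frobenius_add distrib_left sum.distrib)

lemma linearized_diff: "linearized c D (x - y) = linearized c D x - linearized c D (y :: 'a)"
  by (simp add: linearized_def frobenius_diff right_diff_distrib sum_subtractf)

lemma linearized_0: "linearized c D (0 :: 'a) = 0"
  using q_pos by (simp add: linearized_def zero_power)

lemma linearized_smult: "a \<in> Fq q \<Longrightarrow> linearized c D (a * x) = a * linearized c D (x :: 'a)"
  by (simp add: linearized_def power_mult_distrib Fq_power_q_power sum_distrib_left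
      mult.left_commute)

lemma linearized_coeff_diff:
  "linearized (\<lambda>j. c j - c' j) D x = linearized c D x - linearized c' D (x :: 'a)"
  by (simp add: linearized_def left_diff_distrib sum_subtractf)

lemma linearized_sum:
  assumes "finite I" "\<And>i. i \<in> I \<Longrightarrow> a i \<in> Fq q"
  shows "linearized c D (\<Sum>i\<in>I. a i * w i) = (\<Sum>i\<in>I. a i * linearized c D (w i :: 'a))"
  using assms
  by (induction I rule: finite_induct) (auto simp: linearized_0 linearized_add linearized_smult)

lemma card_Fq: "card (Fq q :: 'a set) = q"
proof (rule antisym)
  define c :: "nat \<Rightarrow> 'a" where "c = (\<lambda>j. if j = 0 then -1 else 1)"
  have "Fq q = {x::'a. linearized c 2 x = 0}"
    by (simp add: Fq_def linearized_def c_def numeral_2_eq_2)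
  moreover have "card {x::'a. linearized c 2 x = 0} \<le> q ^ (2 - 1)"
    by (rule card_linearized_roots_le[of 1]) (auto simp: c_def)
  ultimately show "card (Fq q :: 'a set) \<le> q" by simp
next
  \<comment> \<open>\<open>x \<mapsto> x\<^sup>q - x\<close> has kernel \<open>F\<^sub>q\<close> and its image lies in the kernel of the trace, which has
      at most \<open>q\<^bsup>m-1\<^esup>\<close> elements.\<close>
  define \<phi> :: "'a \<Rightarrow> 'a" where "\<phi> x = x ^ q - x" for x
  define trace :: "'a \<Rightarrow> 'a" where "trace = linearized (\<lambda>_. 1) m"
  have "\<phi> ` UNIV \<subseteq> {x. trace x = 0}"
  proof safe
    fix y :: 'a
    have "trace (\<phi> y) = (\<Sum>j<m. (y ^ q - y) ^ (q ^ j))"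
      by (simp add: trace_def linearized_def \<phi>_def)
    also have "\<dots> = (\<Sum>j<m. y ^ (q ^ Suc j) - y ^ (q ^ j))"
      by (simp only: frobenius_diff power_mult[symmetric] power_Suc)
    also have "\<dots> = y ^ (q ^ m) - y ^ (q ^ 0)" by (rule sum_lessThan_telescope)
    also have "\<dots> = 0" by (simp add: power_q_power_m)
    finally show "trace (\<phi> y) = 0" .
  qed
  then have "card (\<phi> ` UNIV) \<le> card {x. trace x = 0}" by (intro card_mono) simp_all
  also have "\<dots> \<le> q ^ (m - 1)"
    unfolding trace_def by (rule card_linearized_roots_le[of 0]) (use one_le_m in auto)
  finally have image: "card (\<phi> ` UNIV) \<le> q ^ (m - 1)" .
  have "q ^ (m - 1) * q = card (UNIV :: 'a set)"
    using one_le_m card_UNIV power_Suc2[of q "m - 1"] by simp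
  also have "\<dots> = card (\<phi> ` UNIV) * card {x\<in>UNIV. \<phi> x = 0}"
    by (rule card_eq_card_image_mult_card_kernel)
      (use frobenius_diff[of _ _ 1] in \<open>auto simp: \<phi>_def\<close>)
  also have "{x\<in>UNIV. \<phi> x = 0} = Fq q" by (auto simp: \<phi>_def Fq_def)
  also have "card (\<phi> ` UNIV) * card (Fq q :: 'a set) \<le> q ^ (m - 1) * card (Fq q :: 'a set)"
    using image by (rule mult_le_mono1)
  finally show "q \<le> card (Fq q :: 'a set)" using q_pos by simp
qed

section \<open>Linear algebra over \<open>F\<^sub>q\<close>\<close>

definition Fq_span :: "nat set \<Rightarrow> (nat \<Rightarrow> 'a) \<Rightarrow> 'a set" where
  "Fq_span I w = {\<Sum>i\<in>I. c i * w i | c. \<forall>i\<in>I. c i \<in> Fq q}"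

definition Fq_subspace :: "'a set \<Rightarrow> bool" where
  "Fq_subspace S \<longleftrightarrow> 0 \<in> S \<and> (\<forall>x\<in>S. \<forall>y\<in>S. x + y \<in> S) \<and> (\<forall>a\<in>Fq q. \<forall>x\<in>S. a * x \<in> S)"

lemma Fq_spanI: "(\<And>i. i \<in> I \<Longrightarrow> c i \<in> Fq q) \<Longrightarrow> (\<Sum>i\<in>I. c i * w i) \<in> Fq_span I w"
  unfolding Fq_span_def by blast

lemma Fq_spanE:
  assumes "x \<in> Fq_span I w"
  obtains c where "\<forall>i\<in>I. c i \<in> Fq q" and "x = (\<Sum>i\<in>I. c i * w i)"
  using assms unfolding Fq_span_def by blast

lemma Fq_span_eq_image: "Fq_span I w = (\<lambda>c. \<Sum>i\<in>I. c i * w i) ` (\<Pi>\<^sub>E i\<in>I. Fq q)"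
proof safe
  fix x assume "x \<in> Fq_span I w"
  then obtain c where c: "\<forall>i\<in>I. c i \<in> Fq q" "x = (\<Sum>i\<in>I. c i * w i)"
    by (elim Fq_spanE)
  then have "x = (\<Sum>i\<in>I. restrict c I i * w i)" by simp
  then show "x \<in> (\<lambda>c. \<Sum>i\<in>I. c i * w i) ` (\<Pi>\<^sub>E i\<in>I. Fq q)"
    using c(1) by (intro image_eqI[of _ _ "restrict c I"]) auto
qed (auto intro: Fq_spanI)

lemma card_Fq_span:
  assumes "finite I" "lin_indep_Fq q I w"
  shows "card (Fq_span I w) = q ^ card I"
proof -
  have "inj_on (\<lambda>c. \<Sum>i\<in>I. c i * w i) (\<Pi>\<^sub>E i\<in>I. Fq q)"
  proof (rule inj_onI)
    fix c c' assume c: "c \<in> (\<Pi>\<^sub>E i\<in>I. Fq q)" "c' \<in> (\<Pi>\<^sub>E i\<in>I. Fq q)"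
      and eq: "(\<Sum>i\<in>I. c i * w i) = (\<Sum>i\<in>I. c' i * w i)"
    have "(\<Sum>i\<in>I. (c i - c' i) * w i) = 0" using eq by (simp add: algebra_simps sum_subtractf)
    moreover have "\<forall>i\<in>I. c i - c' i \<in> Fq q" using c by (auto intro: Fq_diff)
    ultimately have "\<forall>i\<in>I. c i - c' i = 0"
      using assms(2) unfolding lin_indep_Fq_def by (elim allE[of _ "\<lambda>i. c i - c' i"]) simp
    then show "c = c'" using c by (auto intro: PiE_ext)
  qed
  then show ?thesis unfolding Fq_span_eq_image using assms(1)
    by (simp add: card_image card_PiE card_Fq)
qed

lemma Fq_span_cong: "(\<And>i. i \<in> I \<Longrightarrow> w i = w' i) \<Longrightarrow> Fq_span I w = Fq_span I w'"
  unfolding Fq_span_def by (metis (no_types, lifting) sum.cong)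

lemma lin_indep_Fq_cong:
  fixes w w' :: "nat \<Rightarrow> 'a"
  shows "(\<And>i. i \<in> I \<Longrightarrow> w i = w' i) \<Longrightarrow> lin_indep_Fq q I w = lin_indep_Fq q I w'"
  unfolding lin_indep_Fq_def by (metis (no_types, lifting) sum.cong)

lemma Fq_span_uminus: "Fq_span I (\<lambda>i. - w i) = Fq_span I (w :: nat \<Rightarrow> 'a)"
proof -
  have sub: "Fq_span I (\<lambda>i. - w i) \<subseteq> Fq_span I w" for w :: "nat \<Rightarrow> 'a"
  proof
    fix x assume "x \<in> Fq_span I (\<lambda>i. - w i)"
    then obtain c where "\<forall>i\<in>I. c i \<in> Fq q" "x = (\<Sum>i\<in>I. c i * - w i)"
      by (elim Fq_spanE)
    then show "x \<in> Fq_span I w"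
      using Fq_spanI[of I "\<lambda>i. - c i" w] by (auto intro: Fq_neg)
  qed
  from sub[of w] sub[of "\<lambda>i. - w i"] show ?thesis by auto
qed

lemma Fq_subspace_sum:
  assumes "Fq_subspace S" "finite J" "\<And>j. j \<in> J \<Longrightarrow> a j \<in> Fq q" "\<And>j. j \<in> J \<Longrightarrow> u j \<in> S"
  shows "(\<Sum>j\<in>J. a j * u j) \<in> S"
  using assms(2-4) assms(1) unfolding Fq_subspace_def
  by (induction J rule: finite_induct) simp_all

lemma Fq_subspace_diff: "Fq_subspace S \<Longrightarrow> x \<in> S \<Longrightarrow> y \<in> S \<Longrightarrow> x - y \<in> S"
  using Fq_neg[OF Fq_1] unfolding Fq_subspace_def
  by (metis mult_minus1 diff_conv_add_uminus)

lemma Fq_subspace_Fq_span: "Fq_subspace (Fq_span I w)"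
  unfolding Fq_subspace_def
proof (intro conjI ballI)
  show "0 \<in> Fq_span I w" using Fq_spanI[of I "\<lambda>_. 0" w] Fq_0 by simp
next
  fix x y assume x: "x \<in> Fq_span I w" and y: "y \<in> Fq_span I w"
  obtain c where c: "\<forall>i\<in>I. c i \<in> Fq q" "x = (\<Sum>i\<in>I. c i * w i)"
    using x by (rule Fq_spanE)
  obtain c' where c': "\<forall>i\<in>I. c' i \<in> Fq q" "y = (\<Sum>i\<in>I. c' i * w i)"
    using y by (rule Fq_spanE)
  show "x + y \<in> Fq_span I w"
    using Fq_spanI[of I "\<lambda>i. c i + c' i" w] c c' by (simp add: Fq_add sum.distrib distrib_right)
next
  fix a :: 'a and x assume "a \<in> Fq q" "x \<in> Fq_span I w"
  then obtain c where "\<forall>i\<in>I. c i \<in> Fq q" "x = (\<Sum>i\<in>I. c i * w i)"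
    by (elim Fq_spanE)
  then show "a * x \<in> Fq_span I w"
    using Fq_spanI[of I "\<lambda>i. a * c i" w] \<open>a \<in> Fq q\<close>
    by (simp add: Fq_mult sum_distrib_left mult.assoc)
qed

lemma Fq_span_subset:
  assumes "Fq_subspace S" "finite I" "\<And>i. i \<in> I \<Longrightarrow> w i \<in> S"
  shows "Fq_span I w \<subseteq> S"
  using Fq_subspace_sum[OF assms(1,2)] assms(3) by (auto elim!: Fq_spanE)

lemma Fq_span_mono:
  assumes "finite J" "I \<subseteq> J"
  shows "Fq_span I w \<subseteq> Fq_span J w"
proof
  fix x assume "x \<in> Fq_span I w"
  then obtain c where c: "\<forall>i\<in>I. c i \<in> Fq q" "x = (\<Sum>i\<in>I. c i * w i)"
    by (elim Fq_spanE)
  have "x = (\<Sum>i\<in>J. (if i \<in> I then c i else 0) * w i)"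
    unfolding c(2) by (rule sum.mono_neutral_cong_left) (use assms in auto)
  then show "x \<in> Fq_span J w"
    using Fq_spanI[of J "\<lambda>i. if i \<in> I then c i else 0" w] c(1) Fq_0 by auto
qed

lemma mem_Fq_span: "finite I \<Longrightarrow> i \<in> I \<Longrightarrow> w i \<in> Fq_span I w"
  using Fq_span_mono[of I "{i}" w] Fq_spanI[of "{i}" "\<lambda>_. 1" w] Fq_1 by auto

lemma lin_indep_Fq_subset:
  fixes w :: "nat \<Rightarrow> 'a"
  assumes "lin_indep_Fq q J w" "I \<subseteq> J" "finite J"
  shows "lin_indep_Fq q I w"
  unfolding lin_indep_Fq_def
proof (intro allI impI)
  fix c assume c: "\<forall>i\<in>I. c i \<in> Fq q" and zero: "(\<Sum>i\<in>I. c i * w i) = 0"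
  let ?c = "\<lambda>j. if j \<in> I then c j else 0"
  have "(\<Sum>j\<in>J. ?c j * w j) = (\<Sum>i\<in>I. c i * w i)"
    by (rule sum.mono_neutral_cong_right) (use assms(2,3) in auto)
  then have "(\<Sum>j\<in>J. ?c j * w j) = 0" using zero by simp
  moreover have "\<forall>j\<in>J. ?c j \<in> Fq q" using c Fq_0 by auto
  ultimately have "\<forall>j\<in>J. ?c j = 0"
    using assms(1) unfolding lin_indep_Fq_def by (elim allE[of _ ?c]) blast
  then show "\<forall>i\<in>I. c i = 0" using assms(2) by (metis subsetD)
qed

lemma lin_indep_Fq_insert_iff:
  fixes w :: "nat \<Rightarrow> 'a"
  assumes "finite I" "i \<notin> I"
  shows "lin_indep_Fq q (insert i I) w \<longleftrightarrow> lin_indep_Fq q I w \<and> w i \<notin> Fq_span I w"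
proof (intro iffI conjI; (elim conjE)?)
  assume ind: "lin_indep_Fq q (insert i I) w"
  then show "lin_indep_Fq q I w"
    using lin_indep_Fq_subset assms(1) by blast
  show "w i \<notin> Fq_span I w"
  proof
    assume "w i \<in> Fq_span I w"
    then obtain c where c: "\<forall>j\<in>I. c j \<in> Fq q" "w i = (\<Sum>j\<in>I. c j * w j)"
      by (elim Fq_spanE)
    let ?c = "c(i := -1)"
    have "(\<Sum>j\<in>I. ?c j * w j) = (\<Sum>j\<in>I. c j * w j)"
      using assms(2) by (intro sum.cong) auto
    then have "(\<Sum>j\<in>insert i I. ?c j * w j) = 0" using assms c(2) by simp
    moreover have "\<forall>j\<in>insert i I. ?c j \<in> Fq q" using c(1) Fq_neg[OF Fq_1] by auto
    ultimately have "?c i = 0" using ind unfolding lin_indep_Fq_def by blast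
    then show False by simp
  qed
next
  assume ind: "lin_indep_Fq q I w" and new: "w i \<notin> Fq_span I w"
  show "lin_indep_Fq q (insert i I) w"
    unfolding lin_indep_Fq_def
  proof (intro allI impI)
    fix c assume c: "\<forall>j\<in>insert i I. c j \<in> Fq q" and "(\<Sum>j\<in>insert i I. c j * w j) = 0"
    then have sum0: "c i * w i + (\<Sum>j\<in>I. c j * w j) = 0" using assms by simp
    have ci: "c i = 0"
    proof (rule ccontr)
      assume nz: "c i \<noteq> 0"
      have "c i * w i = - (\<Sum>j\<in>I. c j * w j)" using sum0 by (simp add: eq_neg_iff_add_eq_0)
      then have "w i = - (\<Sum>j\<in>I. c j * w j) / c i" using nz by (simp add: field_simps)
      also have "\<dots> = (\<Sum>j\<in>I. (- (c j / c i)) * w j)"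
        by (simp add: sum_divide_distrib sum_negf)
      finally have "w i = (\<Sum>j\<in>I. (- (c j / c i)) * w j)" .
      then have "w i \<in> Fq_span I w"
        using Fq_spanI[of I "\<lambda>j. - (c j / c i)" w] c by (simp add: Fq_neg Fq_divide)
      with new show False ..
    qed
    then have "\<forall>j\<in>I. c j = 0" using ind sum0 c unfolding lin_indep_Fq_def by simp
    with ci show "\<forall>j\<in>insert i I. c j = 0" by simp
  qed
qed

lemma card_Fq_span_eq_power_rk: "card (Fq_span {..<n} u) = q ^ rk q n u"
proof -
  define R where "R = {card I | I. I \<subseteq> {..<n} \<and> lin_indep_Fq q I u}"
  have "R \<subseteq> {..n}" unfolding R_def by (auto dest: card_mono[OF finite_lessThan])
  then have finR: "finite R" using finite_subset by blast
  have "0 \<in> R" unfolding R_def lin_indep_Fq_def by (intro CollectI exI[of _ "{}"]) auto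
  then have "Max R \<in> R" using finR by (intro Max_in) auto
  then obtain I0 where I0: "I0 \<subseteq> {..<n}" "lin_indep_Fq q I0 u" "card I0 = rk q n u"
    unfolding R_def rk_def by auto
  have fin: "finite I0" using I0(1) finite_subset by blast
  have in_span: "u j \<in> Fq_span I0 u" if "j < n" for j
  proof (rule ccontr)
    assume new: "u j \<notin> Fq_span I0 u"
    then have "j \<notin> I0" using mem_Fq_span[OF fin] by blast
    then have "card (insert j I0) \<in> R"
      using lin_indep_Fq_insert_iff[OF fin] I0(1,2) new that unfolding R_def by blast
    then have "card (insert j I0) \<le> rk q n u" unfolding rk_def R_def[symmetric] using finR by simp
    then show False using I0(3) fin \<open>j \<notin> I0\<close> by simp
  qed
  have "Fq_span {..<n} u = Fq_span I0 u"
    using Fq_span_subset[OF Fq_subspace_Fq_span finite_lessThan in_span] Fq_span_mono I0(1)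
    by (simp add: subset_antisym)
  then show ?thesis using card_Fq_span[OF fin I0(2)] I0(3) by simp
qed

lemma linearized_image_Fq_span:
  assumes "finite I"
  shows "linearized c D ` Fq_span I w = Fq_span I (\<lambda>i. linearized c D (w i :: 'a))"
proof (intro Set.set_eqI iffI)
  fix y assume "y \<in> linearized c D ` Fq_span I w"
  then obtain a where "\<forall>i\<in>I. a i \<in> Fq q" "y = linearized c D (\<Sum>i\<in>I. a i * w i)"
    by (auto elim: Fq_spanE)
  then show "y \<in> Fq_span I (\<lambda>i. linearized c D (w i))"
    using linearized_sum[OF assms] Fq_spanI by metis
next
  fix y assume "y \<in> Fq_span I (\<lambda>i. linearized c D (w i))"
  then obtain a where a: "\<forall>i\<in>I. a i \<in> Fq q" "y = (\<Sum>i\<in>I. a i * linearized c D (w i))"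
    by (elim Fq_spanE)
  then have "y = linearized c D (\<Sum>i\<in>I. a i * w i)" using linearized_sum[OF assms, of a] by simp
  moreover have "(\<Sum>i\<in>I. a i * w i) \<in> Fq_span I w" using Fq_spanI[of I a w] a(1) by simp
  ultimately show "y \<in> linearized c D ` Fq_span I w" by blast
qed

lemma linearized_vanishes_on_Fq_span:
  assumes "finite I" "\<And>i. i \<in> I \<Longrightarrow> linearized c D (w i) = (0 :: 'a)" "x \<in> Fq_span I w"
  shows "linearized c D x = 0"
  using assms(3) linearized_sum[OF assms(1)] assms(2) by (auto elim!: Fq_spanE)

text \<open>Otherwise the polynomial would vanish on the whole span of the \<open>w i\<close>, which has more
  elements than its degree \<open>q\<^bsup>D-1\<^esup>\<close>.\<close>
lemma linearized_coeff_eq_0: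
  assumes "finite I" "lin_indep_Fq q I w" "D \<le> card I"
    and "\<And>i. i \<in> I \<Longrightarrow> linearized c D (w i) = (0 :: 'a)" "j < D"
  shows "c j = 0"
proof (rule ccontr)
  assume "c j \<noteq> 0"
  have "Fq_span I w \<subseteq> {x. linearized c D x = 0}"
    using linearized_vanishes_on_Fq_span[of I c D w] assms(1,4) by blast
  then have "q ^ card I \<le> card {x. linearized c D x = 0}"
    using card_Fq_span[OF assms(1,2)] by (metis card_mono finite)
  also have "\<dots> \<le> q ^ (D - 1)" by (rule card_linearized_roots_le[of j D c, OF assms(5) \<open>c j \<noteq> 0\<close>])
  finally have "card I \<le> D - 1" using two_le_q by (simp add: power_le_imp_le_exp)
  then show False using assms(3,5) by simp
qed

section \<open>Ordered bases and subspace polynomials\<close>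

definition indep_tuples :: "'a set \<Rightarrow> nat \<Rightarrow> (nat \<Rightarrow> 'a) set" where
  "indep_tuples S s = {w \<in> (\<Pi>\<^sub>E i\<in>{..<s}. S). lin_indep_Fq q {..<s} w}"

lemma indep_tuples_Suc:
  "indep_tuples S (Suc s) =
     (\<lambda>(w, v). w(s := v)) ` (SIGMA w:indep_tuples S s. S - Fq_span {..<s} w)"
proof (intro Set.set_eqI iffI)
  fix u assume u: "u \<in> indep_tuples S (Suc s)"
  define w where "w = u(s := undefined)"
  have "lin_indep_Fq q {..<s} u = lin_indep_Fq q {..<s} w" "Fq_span {..<s} u = Fq_span {..<s} w"
    by (auto intro!: lin_indep_Fq_cong Fq_span_cong simp: w_def)
  moreover have "lin_indep_Fq q (insert s {..<s}) u"
    using u by (simp add: indep_tuples_def lessThan_Suc)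
  ultimately have "lin_indep_Fq q {..<s} w" "u s \<notin> Fq_span {..<s} w"
    using lin_indep_Fq_insert_iff[of "{..<s}" s u] by simp_all
  moreover have "w \<in> (\<Pi>\<^sub>E i\<in>{..<s}. S)" "u s \<in> S" "u = w(s := u s)"
    using u by (auto simp: indep_tuples_def w_def PiE_def Pi_def extensional_def)
  ultimately show "u \<in> (\<lambda>(w, v). w(s := v)) ` (SIGMA w:indep_tuples S s. S - Fq_span {..<s} w)"
    unfolding indep_tuples_def by (intro image_eqI[of _ _ "(w, u s)"]) auto
next
  fix u assume "u \<in> (\<lambda>(w, v). w(s := v)) ` (SIGMA w:indep_tuples S s. S - Fq_span {..<s} w)"
  then obtain w v where wv: "w \<in> indep_tuples S s" "v \<in> S" "v \<notin> Fq_span {..<s} w"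
    "u = w(s := v)" by auto
  have "lin_indep_Fq q {..<s} u = lin_indep_Fq q {..<s} w" "Fq_span {..<s} u = Fq_span {..<s} w"
    by (auto intro!: lin_indep_Fq_cong Fq_span_cong simp: wv(4))
  then have "lin_indep_Fq q (insert s {..<s}) u"
    using wv lin_indep_Fq_insert_iff[of "{..<s}" s u] by (simp add: indep_tuples_def)
  moreover have "u \<in> (\<Pi>\<^sub>E i\<in>{..<Suc s}. S)"
    using wv by (auto simp: indep_tuples_def PiE_def Pi_def extensional_def)
  ultimately show "u \<in> indep_tuples S (Suc s)"
    unfolding indep_tuples_def by (simp add: lessThan_Suc)
qed

lemma card_indep_tuples:
  assumes "Fq_subspace S" "finite S"
  shows "card (indep_tuples S s) = (\<Prod>i<s. card S - q ^ i)"
proof (induction s)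
  case 0
  have "indep_tuples S 0 = {\<lambda>_. undefined}" by (auto simp: indep_tuples_def lin_indep_Fq_def)
  then show ?case by simp
next
  case (Suc s)
  have fin: "finite (indep_tuples S s)"
    by (rule finite_subset[of _ "\<Pi>\<^sub>E i\<in>{..<s}. S"])
      (use assms in \<open>auto simp: indep_tuples_def intro: finite_PiE\<close>)
  have "inj_on (\<lambda>(w, v). w(s := v)) (SIGMA w:indep_tuples S s. S - Fq_span {..<s} w)"
  proof (rule inj_onI, clarify)
    fix w v w' v'
    assume "w \<in> indep_tuples S s" "w' \<in> indep_tuples S s" and eq: "w(s := v) = w'(s := v')"
    then have "w s = w' s" by (auto simp: indep_tuples_def PiE_def extensional_def)
    then have "w j = w' j" for j
      using fun_cong[OF eq, of j] by (cases "j = s") simp_all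
    then show "w = w' \<and> v = v'"
      using fun_cong[OF eq, of s] by auto
  qed
  then have "card (indep_tuples S (Suc s)) = card (SIGMA w:indep_tuples S s. S - Fq_span {..<s} w)"
    unfolding indep_tuples_Suc by (rule card_image)
  also have "\<dots> = (\<Sum>w\<in>indep_tuples S s. card (S - Fq_span {..<s} w))"
    by (rule card_SigmaI) (use fin assms(2) in auto)
  also have "\<dots> = (\<Sum>w\<in>indep_tuples S s. card S - q ^ s)"
  proof (rule sum.cong[OF refl])
    fix w assume w: "w \<in> indep_tuples S s"
    have sub: "Fq_span {..<s} w \<subseteq> S"
      by (rule Fq_span_subset[OF assms(1)]) (use w in \<open>auto simp: indep_tuples_def PiE_def Pi_def\<close>)
    moreover have "card (Fq_span {..<s} w) = q ^ s"
      using card_Fq_span[OF finite_lessThan] w by (simp add: indep_tuples_def)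
    ultimately show "card (S - Fq_span {..<s} w) = card S - q ^ s"
      using card_Diff_subset[OF finite_subset[OF sub assms(2)] sub] by simp
  qed
  finally show ?case using Suc by simp
qed

definition monic_linearized :: "nat \<Rightarrow> (nat \<Rightarrow> 'a) \<Rightarrow> 'a \<Rightarrow> 'a" where
  "monic_linearized s c x = linearized (c(s := 1)) (Suc s) x"

lemma monic_linearized_expand: "monic_linearized s c x = linearized c s x + x ^ (q ^ s)"
proof -
  have "linearized (c(s := 1)) s x = linearized c s x"
    unfolding linearized_def by (rule sum.cong) auto
  then show ?thesis unfolding monic_linearized_def by (simp add: linearized_def)
qed

lemma card_monic_linearized_roots_le: "card {x. monic_linearized s c x = 0} \<le> q ^ s"
  unfolding monic_linearized_def using card_linearized_roots_le[of s "Suc s" "c(s := 1)"] by simp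

lemma Fq_subspace_linearized_kernel: "Fq_subspace {x :: 'a. linearized c D x = 0}"
  unfolding Fq_subspace_def by (auto simp: linearized_0 linearized_add linearized_smult)

text \<open>The coefficients solve a square linear system, which is injective, hence surjective.\<close>
lemma ex_monic_linearized_annihilator:
  assumes "lin_indep_Fq q {..<s} w"
  shows "\<exists>c \<in> (\<Pi>\<^sub>E j\<in>{..<s}. (UNIV :: 'a set)). \<forall>l<s. monic_linearized s c (w l) = 0"
proof -
  define D where "D = (\<Pi>\<^sub>E j\<in>{..<s}. (UNIV :: 'a set))"
  define E where "E c = restrict (\<lambda>l. linearized c s (w l)) {..<s}" for c
  have "inj_on E D"
  proof (rule inj_onI)
    fix c c' assume c: "c \<in> D" "c' \<in> D" and eq: "E c = E c'"
    have "linearized (\<lambda>j. c j - c' j) s (w l) = 0" if "l \<in> {..<s}" for l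
      using fun_cong[OF eq, of l] that by (simp add: E_def linearized_coeff_diff)
    then have "c j - c' j = 0" if "j < s" for j
      using linearized_coeff_eq_0[OF finite_lessThan assms, of s "\<lambda>j. c j - c' j" j] that by simp
    then show "c = c'" using c unfolding D_def by (intro PiE_ext) auto
  qed
  moreover have "finite D" unfolding D_def by (intro finite_PiE) auto
  moreover have "E ` D \<subseteq> D" unfolding D_def E_def by (rule image_subsetI) simp
  ultimately have "E ` D = D" by (intro endo_inj_surj)
  moreover have "restrict (\<lambda>l. - (w l ^ (q ^ s))) {..<s} \<in> D" unfolding D_def by simp
  ultimately have "restrict (\<lambda>l. - (w l ^ (q ^ s))) {..<s} \<in> E ` D" by simp
  then obtain c where c: "c \<in> D" "E c = restrict (\<lambda>l. - (w l ^ (q ^ s))) {..<s}"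
    by (auto simp del: restrict_apply)
  have "monic_linearized s c (w l) = 0" if "l < s" for l
    using fun_cong[OF c(2), of l] that by (simp add: E_def monic_linearized_expand)
  then show ?thesis using c(1) unfolding D_def by blast
qed

section \<open>A rank sphere with many codewords\<close>

context
  fixes \<alpha> :: "nat \<Rightarrow> 'a" and n k s :: nat
  assumes lin_indep_\<alpha>: "lin_indep_Fq q {..<n} \<alpha>" and k_le_s: "k \<le> s" and s_le_n: "s \<le> n"
begin

lemma card_span_\<alpha>: "card (Fq_span {..<n} \<alpha>) = q ^ n"
  using card_Fq_span[OF finite_lessThan lin_indep_\<alpha>] by simp

definition annihilator_coeffs :: "(nat \<Rightarrow> 'a) set" where
  "annihilator_coeffs = {c \<in> (\<Pi>\<^sub>E j\<in>{..<s}. (UNIV :: 'a set)).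
     \<exists>w\<in>indep_tuples (Fq_span {..<n} \<alpha>) s. \<forall>l<s. monic_linearized s c (w l) = 0}"

lemma finite_annihilator_coeffs: "finite annihilator_coeffs"
  by (rule finite_subset[of _ "\<Pi>\<^sub>E j\<in>{..<s}. (UNIV :: 'a set)"])
    (auto simp: annihilator_coeffs_def intro: finite_PiE)

text \<open>Double counting: each of the \<open>\<Prod>\<^sub>i\<^sub><\<^sub>s (q\<^sup>n - q\<^sup>i)\<close> independent \<open>s\<close>-tuples in the span of \<open>\<alpha>\<close> is
  annihilated by some coefficient vector, and each coefficient vector annihilates at most
  \<open>\<Prod>\<^sub>i\<^sub><\<^sub>s (q\<^sup>s - q\<^sup>i)\<close> of them, its root set having at most \<open>q\<^sup>s\<close> elements.\<close>
lemma card_indep_tuples_le_card_annihilator_coeffs: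
  "(\<Prod>i<s. q ^ n - q ^ i) \<le> card annihilator_coeffs * (\<Prod>i<s. q ^ s - q ^ i)"
proof -
  define A where "A = indep_tuples (Fq_span {..<n} \<alpha>) s"
  define fibre where "fibre c = {w \<in> A. \<forall>l<s. monic_linearized s c (w l) = 0}" for c
  have finA: "finite A"
    by (rule finite_subset[of _ "\<Pi>\<^sub>E i\<in>{..<s}. Fq_span {..<n} \<alpha>"])
      (auto simp: A_def indep_tuples_def intro!: finite_PiE)
  have cover: "A \<subseteq> (\<Union>c\<in>annihilator_coeffs. fibre c)"
  proof
    fix w assume w: "w \<in> A"
    then have "lin_indep_Fq q {..<s} w" by (simp add: A_def indep_tuples_def)
    then obtain c where c: "c \<in> (\<Pi>\<^sub>E j\<in>{..<s}. UNIV)" "\<forall>l<s. monic_linearized s c (w l) = 0"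
      using ex_monic_linearized_annihilator by blast
    then have "c \<in> annihilator_coeffs" using w unfolding annihilator_coeffs_def A_def by blast
    then show "w \<in> (\<Union>c\<in>annihilator_coeffs. fibre c)" using c w unfolding fibre_def by blast
  qed
  have card_fibre: "card (fibre c) \<le> (\<Prod>i<s. q ^ s - q ^ i)" for c
  proof -
    define U where "U = {x :: 'a. monic_linearized s c x = 0}"
    have "fibre c \<subseteq> indep_tuples U s"
      unfolding fibre_def A_def indep_tuples_def U_def by (auto simp: PiE_iff)
    moreover have "finite (indep_tuples U s)"
      by (rule finite_subset[of _ "\<Pi>\<^sub>E i\<in>{..<s}. U"]) (auto simp: indep_tuples_def intro!: finite_PiE)
    ultimately have "card (fibre c) \<le> card (indep_tuples U s)" by (rule card_mono[rotated])
    also have "\<dots> = (\<Prod>i<s. card U - q ^ i)"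
      unfolding U_def monic_linearized_def by (rule card_indep_tuples[OF Fq_subspace_linearized_kernel]) simp
    also have "\<dots> \<le> (\<Prod>i<s. q ^ s - q ^ i)"
      by (rule prod_mono) (use card_monic_linearized_roots_le[of s c] in \<open>auto simp: U_def\<close>)
    finally show ?thesis .
  qed
  have "(\<Prod>i<s. q ^ n - q ^ i) = card A"
    unfolding A_def card_span_\<alpha>[symmetric] by (rule card_indep_tuples[OF Fq_subspace_Fq_span, symmetric]) simp
  also have "\<dots> \<le> card (\<Union>c\<in>annihilator_coeffs. fibre c)"
    by (rule card_mono[OF _ cover]) (use finite_annihilator_coeffs finA in \<open>auto simp: fibre_def\<close>)
  also have "\<dots> \<le> (\<Sum>c\<in>annihilator_coeffs. card (fibre c))"
    by (rule card_UN_le[OF finite_annihilator_coeffs])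
  also have "\<dots> \<le> card annihilator_coeffs * (\<Prod>i<s. q ^ s - q ^ i)"
    using sum_bounded_above[of annihilator_coeffs "\<lambda>c. card (fibre c)", OF card_fibre] by simp
  finally show ?thesis .
qed

lemma gauss_binom_le_card_annihilator_coeffs: "gauss_binom q n s \<le> card annihilator_coeffs"
proof -
  have "gauss_binom q n s * real (\<Prod>i<s. q ^ s - q ^ i) = real (\<Prod>i<s. q ^ n - q ^ i)"
    by (rule gauss_binom_mult_denominator[OF two_le_q s_le_n])
  also have "\<dots> \<le> real (card annihilator_coeffs * (\<Prod>i<s. q ^ s - q ^ i))"
    using card_indep_tuples_le_card_annihilator_coeffs by (rule of_nat_mono)
  finally have "gauss_binom q n s * real (\<Prod>i<s. q ^ s - q ^ i)
      \<le> real (card annihilator_coeffs) * real (\<Prod>i<s. q ^ s - q ^ i)"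
    by (simp only: of_nat_mult)
  moreover have "0 < (\<Prod>i<s. q ^ s - q ^ i)"
  proof (rule prod_pos)
    fix i assume "i \<in> {..<s}"
    then have "q ^ i < q ^ s" using two_le_q by (intro power_strict_increasing) auto
    then show "0 < q ^ s - q ^ i" by (rule zero_less_diff[THEN iffD2])
  qed
  then have "0 < real (\<Prod>i<s. q ^ s - q ^ i)" by (rule of_nat_0_less_iff[THEN iffD2])
  ultimately show ?thesis by (rule mult_right_le_imp_le)
qed

lemma card_annihilator_kernel:
  assumes "c \<in> annihilator_coeffs"
  shows "card {y \<in> Fq_span {..<n} \<alpha>. monic_linearized s c y = 0} = q ^ s"
proof (rule antisym)
  have "card {y \<in> Fq_span {..<n} \<alpha>. monic_linearized s c y = 0} \<le> card {y. monic_linearized s c y = 0}"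
    by (rule card_mono) auto
  then show "card {y \<in> Fq_span {..<n} \<alpha>. monic_linearized s c y = 0} \<le> q ^ s"
    using card_monic_linearized_roots_le[of s c] by (rule order_trans)
next
  obtain w where w: "w \<in> indep_tuples (Fq_span {..<n} \<alpha>) s" "\<forall>l<s. monic_linearized s c (w l) = 0"
    using assms unfolding annihilator_coeffs_def by blast
  have "Fq_span {..<s} w \<subseteq> Fq_span {..<n} \<alpha>"
    by (rule Fq_span_subset[OF Fq_subspace_Fq_span]) (use w(1) in \<open>auto simp: indep_tuples_def PiE_iff\<close>)
  moreover have "monic_linearized s c y = 0" if "y \<in> Fq_span {..<s} w" for y
    unfolding monic_linearized_def
    by (rule linearized_vanishes_on_Fq_span[OF finite_lessThan _ that])
      (use w(2) in \<open>simp add: monic_linearized_def\<close>)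
  ultimately have "Fq_span {..<s} w \<subseteq> {y \<in> Fq_span {..<n} \<alpha>. monic_linearized s c y = 0}" by blast
  moreover have "card (Fq_span {..<s} w) = q ^ s"
    using card_Fq_span[OF finite_lessThan] w(1) by (simp add: indep_tuples_def)
  ultimately show "q ^ s \<le> card {y \<in> Fq_span {..<n} \<alpha>. monic_linearized s c y = 0}"
    using card_mono[of "{y \<in> Fq_span {..<n} \<alpha>. monic_linearized s c y = 0}" "Fq_span {..<s} w"] by simp
qed

lemma rk_annihilator_values:
  assumes c: "c \<in> annihilator_coeffs" and x: "\<And>i. i < n \<Longrightarrow> x i = - monic_linearized s c (\<alpha> i)"
  shows "rk q n x = n - s"
proof -
  have "card (Fq_span {..<n} \<alpha>) = card (monic_linearized s c ` Fq_span {..<n} \<alpha>) * card {y \<in> Fq_span {..<n} \<alpha>. monic_linearized s c y = 0}"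
  proof (rule card_eq_card_image_mult_card_kernel)
    fix x y assume "x \<in> Fq_span {..<n} \<alpha>" "y \<in> Fq_span {..<n} \<alpha>"
    then show "x - y \<in> Fq_span {..<n} \<alpha>" by (rule Fq_subspace_diff[OF Fq_subspace_Fq_span])
    show "monic_linearized s c (x - y) = monic_linearized s c x - monic_linearized s c y"
      unfolding monic_linearized_def by (rule linearized_diff)
  qed simp
  moreover have "q ^ n = q ^ (n - s) * q ^ s" using s_le_n by (simp flip: power_add)
  ultimately have image: "card (monic_linearized s c ` Fq_span {..<n} \<alpha>) = q ^ (n - s)"
    using card_span_\<alpha> card_annihilator_kernel[OF c] q_pos by simp
  have "Fq_span {..<n} x = Fq_span {..<n} (\<lambda>i. - monic_linearized s c (\<alpha> i))"
    by (rule Fq_span_cong) (simp add: x)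
  also have "\<dots> = monic_linearized s c ` Fq_span {..<n} \<alpha>"
    by (simp add: Fq_span_uminus monic_linearized_def linearized_image_Fq_span)
  finally have "q ^ rk q n x = q ^ (n - s)"
    using card_Fq_span_eq_power_rk[of n x] image by simp
  then show ?thesis using two_le_q by simp
qed

lemma gabidulin_coeff_unique:
  assumes "\<And>i. i < n \<Longrightarrow> (\<Sum>j<k. c j * \<alpha> i ^ (q ^ j)) = (\<Sum>j<k. c' j * \<alpha> i ^ (q ^ j))" "j < k"
  shows "c j = c' j"
  using linearized_coeff_eq_0[OF finite_lessThan lin_indep_\<alpha>, of k "\<lambda>j. c j - c' j" j] assms k_le_s s_le_n
  by (simp add: linearized_coeff_diff linearized_def)

lemma card_annihilator_fibre_le:
  fixes h :: "nat \<Rightarrow> 'a"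
  defines "r \<equiv> \<lambda>i. if i < n then \<alpha> i ^ (q ^ s) + (\<Sum>j\<in>{k..<s}. h j * \<alpha> i ^ (q ^ j)) else 0"
  shows "card {c \<in> annihilator_coeffs. restrict c {k..<s} = h}
      \<le> card (gabidulin q n k \<alpha> \<inter> rank_sphere q n (n - s) r)"
proof -
  define F where "F = {c \<in> annihilator_coeffs. restrict c {k..<s} = h}"
  define g where "g c = (\<lambda>i. if i < n then (\<Sum>j<k. (- c j) * \<alpha> i ^ (q ^ j)) else 0)"
    for c :: "nat \<Rightarrow> 'a"
  have split: "(\<Sum>j<s. f j) = (\<Sum>j<k. f j) + (\<Sum>j\<in>{k..<s}. f j)" for f :: "nat \<Rightarrow> 'a"
  proof -
    have "{..<s} = {..<k} \<union> {k..<s}" using k_le_s by auto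
    moreover have "sum f ({..<k} \<union> {k..<s}) = sum f {..<k} + sum f {k..<s}"
      by (rule sum.union_disjoint) auto
    ultimately show ?thesis by simp
  qed
  have "g c \<in> gabidulin q n k \<alpha> \<inter> rank_sphere q n (n - s) r" if c: "c \<in> F" for c
  proof -
    have tail: "c j = h j" if "j \<in> {k..<s}" for j
      using c that unfolding F_def by (metis (mono_tags, lifting) mem_Collect_eq restrict_apply')
    have "(g c - r) i = - monic_linearized s c (\<alpha> i)" if "i < n" for i
    proof -
      have "(\<Sum>j\<in>{k..<s}. c j * \<alpha> i ^ (q ^ j)) = (\<Sum>j\<in>{k..<s}. h j * \<alpha> i ^ (q ^ j))"
        using tail by (intro sum.cong) simp_all
      then show ?thesis
        using that by (simp add: monic_linearized_expand linearized_def split g_def r_def sum_negf)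
    qed
    then have "rk q n (g c - r) = n - s"
      using c unfolding F_def by (intro rk_annihilator_values) simp_all
    moreover have "g c \<in> gabidulin q n k \<alpha>"
      unfolding gabidulin_def g_def by (rule CollectI, rule exI[of _ "\<lambda>j. - c j"]) simp
    ultimately show ?thesis by (simp add: rank_sphere_def words_def g_def)
  qed
  moreover have "inj_on g F"
  proof (rule inj_onI, rule ext)
    fix c c' j assume c: "c \<in> F" "c' \<in> F" and eq: "g c = g c'"
    consider "j < k" | "j \<in> {k..<s}" | "s \<le> j" by fastforce
    then show "c j = c' j"
    proof cases
      case 1
      have "(\<Sum>j<k. (- c j) * \<alpha> i ^ (q ^ j)) = (\<Sum>j<k. (- c' j) * \<alpha> i ^ (q ^ j))" if "i < n" for i
        using fun_cong[OF eq, of i] that by (simp add: g_def)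
      then have "- c j = - c' j" using 1 by (rule gabidulin_coeff_unique)
      then show ?thesis by simp
    next
      case 2
      then show ?thesis using c unfolding F_def by (metis (mono_tags, lifting) mem_Collect_eq restrict_apply')
    next
      case 3
      then have "j \<notin> {..<s}" by simp
      then show ?thesis
        using c PiE_arb[of c "{..<s}" "\<lambda>_. UNIV" j] PiE_arb[of c' "{..<s}" "\<lambda>_. UNIV" j]
        unfolding F_def annihilator_coeffs_def by simp
    qed
  qed
  moreover have "finite (rank_sphere q n (n - s) r)"
    using finite_words by (rule finite_subset[rotated]) (auto simp: rank_sphere_def)
  ultimately have "card (g ` F) \<le> card (gabidulin q n k \<alpha> \<inter> rank_sphere q n (n - s) r)"
    by (intro card_mono) auto
  then show ?thesis using card_image[OF \<open>inj_on g F\<close>] unfolding F_def by simp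
qed

lemma ex_rank_sphere_card_ge:
  "\<exists>r\<in>words n. gauss_binom q n s / (real q ^ m) ^ (s - k)
      \<le> real (card (gabidulin q n k \<alpha> \<inter> rank_sphere q n (n - s) r))"
proof -
  let ?B = "\<Pi>\<^sub>E j\<in>{k..<s}. (UNIV :: 'a set)"
  let ?tail = "\<lambda>c. restrict c {k..<s}"
  have "?tail \<in> annihilator_coeffs \<rightarrow> ?B" "finite ?B" "?B \<noteq> {}"
    by (simp_all add: finite_PiE PiE_eq_empty_iff)
  then obtain h where pigeon:
    "card annihilator_coeffs \<le> card (?tail -` {h} \<inter> annihilator_coeffs) * card ?B"
    using pigeonhole_card[OF _ finite_annihilator_coeffs] by blast
  define r where "r = (\<lambda>i. if i < n then \<alpha> i ^ (q ^ s) + (\<Sum>j\<in>{k..<s}. h j * \<alpha> i ^ (q ^ j)) else 0)"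
  have "?tail -` {h} \<inter> annihilator_coeffs = {c \<in> annihilator_coeffs. ?tail c = h}" by auto
  then have "card (?tail -` {h} \<inter> annihilator_coeffs) \<le> card (gabidulin q n k \<alpha> \<inter> rank_sphere q n (n - s) r)"
    using card_annihilator_fibre_le[of h] unfolding r_def by simp
  moreover have "card ?B = (q ^ m) ^ (s - k)" by (simp add: card_PiE card_UNIV)
  ultimately have "card annihilator_coeffs
      \<le> card (gabidulin q n k \<alpha> \<inter> rank_sphere q n (n - s) r) * (q ^ m) ^ (s - k)"
    using pigeon mult_le_mono1 order_trans by metis
  then have "real (card annihilator_coeffs)
      \<le> real (card (gabidulin q n k \<alpha> \<inter> rank_sphere q n (n - s) r)) * (real q ^ m) ^ (s - k)"
    by (metis of_nat_mono of_nat_mult of_nat_power)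
  then have "gauss_binom q n s / (real q ^ m) ^ (s - k)
      \<le> real (card (gabidulin q n k \<alpha> \<inter> rank_sphere q n (n - s) r))"
    using gauss_binom_le_card_annihilator_coeffs q_pos by (simp add: pos_divide_le_eq)
  moreover have "r \<in> words n" by (simp add: r_def words_def)
  ultimately show ?thesis by blast
qed

end

end

theorem theorem1:
  fixes \<alpha> :: "nat \<Rightarrow> 'a::{finite,field}"
    and q m n k d \<tau> :: nat
  assumes "prime_power q"
    and "card (UNIV :: 'a set) = q ^ m"
    and "0 < n" and "n \<le> m" and "0 < k" and "k \<le> n"
    and "\<alpha> \<in> words n" and "lin_indep_Fq q {..<n} \<alpha>"
    and "d = n - k + 1"
    and "\<tau> < d"
  shows "\<exists>r \<in> words n.
     card (gabidulin q n k \<alpha> \<inter> rank_sphere q n \<tau> r) \<le> max_list_size q n \<tau> (gabidulin q n k \<alpha>)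
   \<and> gauss_binom q n (n - \<tau>) / (real q ^ m) ^ (n - \<tau> - k)
       \<le> real (card (gabidulin q n k \<alpha> \<inter> rank_sphere q n \<tau> r))
   \<and> real q ^ m * real q powi (int \<tau> * int (m + n) - int \<tau> ^ 2 - int m * int d)
       \<le> gauss_binom q n (n - \<tau>) / (real q ^ m) ^ (n - \<tau> - k)
   \<and> (n = m \<longrightarrow> real q ^ n * real q powi (2 * int n * int \<tau> - int \<tau> ^ 2 - int n * int d)
       \<le> real (max_list_size q n \<tau> (gabidulin q n k \<alpha>)))"
proof -
  let ?G = "gabidulin q n k \<alpha>"
  have \<tau>_le: "\<tau> \<le> n - k" using assms(6,9,10) by simp
  then have "k \<le> n - \<tau>" and "n - (n - \<tau>) = \<tau>" using assms(6) by simp_all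
  then obtain r where r: "r \<in> words n"
    and lower: "gauss_binom q n (n - \<tau>) / (real q ^ m) ^ (n - \<tau> - k)
      \<le> real (card (?G \<inter> rank_sphere q n \<tau> r))"
    using ex_rank_sphere_card_ge[OF assms(1,2,8) \<open>k \<le> n - \<tau>\<close> diff_le_self] by auto
  have list: "card (?G \<inter> rank_sphere q n \<tau> r) \<le> max_list_size q n \<tau> ?G"
    using r by (rule card_Int_rank_sphere_le_max_list_size)
  have bound: "real q ^ m * real q powi (int \<tau> * int (m + n) - int \<tau> ^ 2 - int m * int d)
       \<le> gauss_binom q n (n - \<tau>) / (real q ^ m) ^ (n - \<tau> - k)"
    using two_le_q[OF assms(1,2)] assms(6,9) \<tau>_le by (rule powi_le_gauss_binom_div)
  moreover have "n = m \<longrightarrow> real q ^ n * real q powi (2 * int n * int \<tau> - int \<tau> ^ 2 - int n * int d)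
      \<le> real (max_list_size q n \<tau> ?G)"
  proof
    assume "n = m"
    then have "real q ^ n * real q powi (2 * int n * int \<tau> - int \<tau> ^ 2 - int n * int d)
        = real q ^ m * real q powi (int \<tau> * int (m + n) - int \<tau> ^ 2 - int m * int d)"
      by (simp add: algebra_simps)
    also have "\<dots> \<le> real (card (?G \<inter> rank_sphere q n \<tau> r))"
      using bound lower by (rule order_trans)
    also have "\<dots> \<le> real (max_list_size q n \<tau> ?G)"
      using list by (rule of_nat_mono)
    finally show "real q ^ n * real q powi (2 * int n * int \<tau> - int \<tau> ^ 2 - int n * int d)
      \<le> real (max_list_size q n \<tau> ?G)" .
  qed
  ultimately show ?thesis
    using r lower list by blast
qed

end
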